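(* Let $n$ be a positive integer. Then for all complex numbers $x$ and $y$ with $y\neq -1$, $$\sum_{r=2}^{n+1}\frac{(-1)^rB_{r}(x)}{r}\binom{n-1}{r-2}\binom{y}{r-1}=\sum_{r=1}^{n}\binom{n-1}{r-1}\binom{y+n-r}{n}\left(\frac{B_{r+1}(-x)}{r+1}+\frac{B_{r}(-x)}{r}\right)+\frac{1}{y+1}\binom{y+n}{n+1}.$$
   Context: The Bernoulli polynomials $B_n(x)$ are defined by $\sum_{n=0}^\infty\frac{B_n(x)}{n!}t^n=\frac{te^{xt}}{e^t-1}$. For a complex number $y$ and an integer $k\ge0$, $\binom{y}{k}=\frac{y(y-1)\cdots(y-k+1)}{k!}$; for ordinary integer binomial coefficients $\binom{a}{b}$ with $a\ge 0$ and $b<0$ or $b>a$, $\binom{a}{b}=0$. *)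

theory Defs
  imports "HOL-Analysis.Analysis" "HOL-Computational_Algebra.Formal_Power_Series"
begin

definition bernpoly :: "nat \<Rightarrow> complex \<Rightarrow> complex" where
  "bernpoly n x = fact n * fps_nth ((fps_X * fps_exp x) / (fps_exp 1 - 1)) n"

end

theory Submission
  imports Defs
begin

text \<open>Reflection and the Appell property of Bernoulli polynomials give
  \<open>(-1)^r B_r(x) = B_r(1 - x) = \<Sum>k\<le>r. (r choose k) B_k(-x)\<close>. Substituting this turns
  the left-hand side into a double sum in which the coefficient of each \<open>B_k(-x)\<close> is a
  purely binomial expression. The absorption identity
  \<open>(s+2 choose k)/(s+2) = (s+1 choose k-1)/k\<close>, Pascal's rule and the Chu--Vandermonde
  identity for generalised binomial coefficients evaluate these coefficients; the term
  \<open>k = 0\<close> produces \<open>(y+n gchoose n+1)/(y+1)\<close>.\<close>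

definition bernpoly_egf :: "'a::field_char_0 \<Rightarrow> 'a fps" where
  "bernpoly_egf x = fps_X * fps_exp x / (fps_exp 1 - 1)"

lemma fps_exp_minus_1_neq_0:
  assumes "(c :: 'a :: field_char_0) \<noteq> 0"
  shows "fps_exp c - 1 \<noteq> 0"
proof
  assume "fps_exp c - 1 = 0"
  hence "fps_nth (fps_exp c - 1) 1 = 0" by simp
  with assms show False by simp
qed

lemma bernpoly_egf_times_denominator:
  "bernpoly_egf x * (fps_exp 1 - 1) = fps_X * fps_exp (x :: 'a :: field_char_0)"
proof -
  have "subdegree (fps_exp 1 - 1 :: 'a fps) = 1" "subdegree (fps_X * fps_exp x :: 'a fps) = 1"
    by (rule subdegreeI; simp)+
  hence "(fps_exp 1 - 1) dvd fps_X * fps_exp x"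
    by (simp add: fps_dvd_iff fps_exp_minus_1_neq_0)
  thus ?thesis unfolding bernpoly_egf_def by simp
qed

lemma bernpoly_conv_egf: "bernpoly n x = fact n * fps_nth (bernpoly_egf x) n"
  by (simp add: bernpoly_def bernpoly_egf_def)

lemma bernpoly_egf_add: "bernpoly_egf (a + b) = bernpoly_egf a * fps_exp (b :: 'a :: field_char_0)"
proof -
  have "bernpoly_egf (a + b) * (fps_exp 1 - 1) = fps_X * fps_exp a * fps_exp b"
    by (simp add: bernpoly_egf_times_denominator fps_exp_add_mult mult.assoc)
  also have "\<dots> = bernpoly_egf a * (fps_exp 1 - 1) * fps_exp b"
    by (simp only: bernpoly_egf_times_denominator)
  finally have "bernpoly_egf (a + b) * (fps_exp 1 - 1) = bernpoly_egf a * fps_exp b * (fps_exp 1 - 1)"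
    by (simp only: mult_ac)
  thus ?thesis using fps_exp_minus_1_neq_0[of "1::'a"] by simp
qed

lemma bernpoly_egf_reflect:
  "bernpoly_egf (1 - x) oo - fps_X = bernpoly_egf (x :: 'a :: field_char_0)"
proof -
  have X: "(fps_X :: 'a fps) oo - fps_X = - fps_X"
    by (simp add: fps_eq_iff fps_X_fps_compose)
  have "(bernpoly_egf (1 - x) * (fps_exp 1 - 1)) oo - fps_X = (fps_X * fps_exp (1 - x)) oo - fps_X"
    by (simp only: bernpoly_egf_times_denominator)
  hence "(bernpoly_egf (1 - x) oo - fps_X) * (fps_exp (-1) - 1) = - fps_X * fps_exp (x - 1)"
    by (simp add: fps_compose_mult_distrib fps_compose_sub_distrib X)
  also have "\<dots> = - (bernpoly_egf x * (fps_exp 1 - 1)) * fps_exp (-1)"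
    by (simp add: bernpoly_egf_times_denominator mult.assoc flip: fps_exp_add_mult)
  also have "\<dots> = bernpoly_egf x * (fps_exp (-1) - 1)"
    by (simp add: algebra_simps flip: fps_exp_add_mult)
  finally show ?thesis
    using fps_exp_minus_1_neq_0[of "-1::'a"] by simp
qed

lemma bernpoly_0 [simp]: "bernpoly 0 x = 1"
proof -
  have "fps_nth (bernpoly_egf x * (fps_exp 1 - 1)) 1 = fps_nth (fps_X * fps_exp x) 1"
    by (simp only: bernpoly_egf_times_denominator)
  thus ?thesis by (simp add: bernpoly_conv_egf fps_mult_nth)
qed

lemma bernpoly_reflect: "bernpoly r (1 - x) = (-1) ^ r * bernpoly r x"
proof -
  have "fps_nth (bernpoly_egf x) r = (-1) ^ r * fps_nth (bernpoly_egf (1 - x)) r"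
    by (subst bernpoly_egf_reflect[of x, symmetric]) (simp add: fps_compose_uminus')
  thus ?thesis by (simp add: bernpoly_conv_egf)
qed

lemma bernpoly_add:
  "bernpoly r (a + b) = (\<Sum>k\<le>r. of_nat (r choose k) * bernpoly k a * b ^ (r - k))"
proof -
  have "bernpoly r (a + b) = fact r * (\<Sum>k\<le>r. fps_nth (bernpoly_egf a) k * (b ^ (r - k) / fact (r - k)))"
    by (simp add: bernpoly_conv_egf bernpoly_egf_add fps_mult_nth atLeast0AtMost)
  also have "\<dots> = (\<Sum>k\<le>r. of_nat (r choose k) * bernpoly k a * b ^ (r - k))"
    unfolding sum_distrib_left
  proof (rule sum.cong[OF refl])
    fix k assume "k \<in> {..r}"
    hence "of_nat (fact k * fact (r - k) * (r choose k)) = (of_nat (fact r) :: complex)"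
      using binomial_fact_lemma[of k r] by simp
    hence "(fact r :: complex) = of_nat (r choose k) * fact k * fact (r - k)"
      by (simp add: mult_ac)
    thus "fact r * (fps_nth (bernpoly_egf a) k * (b ^ (r - k) / fact (r - k))) =
          of_nat (r choose k) * bernpoly k a * b ^ (r - k)"
      by (simp add: bernpoly_conv_egf)
  qed
  finally show ?thesis .
qed

lemma gbinomial_Vandermonde_offset:
  fixes y :: "'a :: field_char_0"
  shows "(\<Sum>i\<le>a. of_nat (a choose i) * (y gchoose (i + c))) = (y + of_nat a) gchoose (a + c)"
proof -
  have "(y + of_nat a) gchoose (a + c) = (\<Sum>k\<le>a + c. (of_nat a gchoose k) * (y gchoose (a + c - k)))"
    using gbinomial_Vandermonde[of "of_nat a" y "a + c"] by (simp add: add.commute atLeast0AtMost)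
  also have "\<dots> = (\<Sum>k\<le>a. (of_nat a gchoose k) * (y gchoose (a + c - k)))"
    by (rule sum.mono_neutral_right) (auto simp flip: binomial_gbinomial)
  also have "\<dots> = (\<Sum>k\<le>a. (of_nat a gchoose (a - k)) * (y gchoose (a + c - (a - k))))"
    by (subst sum.atLeastAtMost_rev[of _ 0, simplified atLeast0AtMost]) simp
  also have "\<dots> = (\<Sum>i\<le>a. of_nat (a choose i) * (y gchoose (i + c)))"
    by (rule sum.cong) (auto simp: add.commute simp flip: binomial_gbinomial binomial_symmetric)
  finally show ?thesis ..
qed

lemma sum_choose_choose_gbinomial:
  fixes y :: "'a :: field_char_0"
  shows "(\<Sum>s\<le>m. of_nat (s choose t) * of_nat (m choose s) * (y gchoose (s + c)))
       = of_nat (m choose t) * ((y + of_nat m - of_nat t) gchoose (m + c))"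
proof (cases "t \<le> m")
  case False
  thus ?thesis by (simp add: binomial_eq_0)
next
  case True
  have "(\<Sum>s\<le>m. of_nat (s choose t) * of_nat (m choose s) * (y gchoose (s + c)))
      = (\<Sum>s=t..m. of_nat (m choose t) * (of_nat ((m - t) choose (s - t)) * (y gchoose (s + c))))"
  proof -
    have "(\<Sum>s\<le>m. of_nat (s choose t) * of_nat (m choose s) * (y gchoose (s + c)))
        = (\<Sum>s=t..m. of_nat (s choose t) * of_nat (m choose s) * (y gchoose (s + c)))"
      by (rule sum.mono_neutral_right) auto
    also have "\<dots> = (\<Sum>s=t..m. of_nat (m choose t) * (of_nat ((m - t) choose (s - t)) * (y gchoose (s + c))))"
    proof (rule sum.cong[OF refl])
      fix s assume "s \<in> {t..m}"
      hence "(m choose s) * (s choose t) = (m choose t) * ((m - t) choose (s - t))"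
        by (intro choose_mult) auto
      thus "of_nat (s choose t) * of_nat (m choose s) * (y gchoose (s + c)) =
            of_nat (m choose t) * (of_nat ((m - t) choose (s - t)) * (y gchoose (s + c)))"
        by (metis (no_types, lifting) mult.assoc mult.commute of_nat_mult)
    qed
    finally show ?thesis .
  qed
  also have "\<dots> = of_nat (m choose t) * (\<Sum>i\<le>m - t. of_nat ((m - t) choose i) * (y gchoose (i + (t + c))))"
    using True
    by (simp add: sum_distrib_left sum.atLeastAtMost_shift_0[of t m] atLeast0AtMost add_ac)
  also have "\<dots> = of_nat (m choose t) * ((y + of_nat m - of_nat t) gchoose (m + c))"
    using True by (simp add: gbinomial_Vandermonde_offset of_nat_diff add_diff_eq)
  finally show ?thesis .
qed

lemma sum_binomial_Pascal:
  fixes g :: "nat \<Rightarrow> 'a :: comm_semiring_1"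
  shows "(\<Sum>j\<le>Suc s. of_nat (Suc s choose j) * g j) = (\<Sum>t\<le>s. of_nat (s choose t) * (g t + g (Suc t)))"
proof -
  have "(\<Sum>j\<le>Suc s. of_nat (Suc s choose j) * g j)
      = g 0 + (\<Sum>t\<le>s. of_nat (s choose Suc t) * g (Suc t)) + (\<Sum>t\<le>s. of_nat (s choose t) * g (Suc t))"
    unfolding sum.atMost_Suc_shift[of _ s] by (simp add: sum.distrib distrib_right add_ac)
  also have "g 0 + (\<Sum>t\<le>s. of_nat (s choose Suc t) * g (Suc t)) = (\<Sum>t\<le>s. of_nat (s choose t) * g t)"
  proof -
    have "(\<Sum>t\<le>Suc s. of_nat (s choose t) * g t) = (\<Sum>t\<le>s. of_nat (s choose t) * g t)"
      by (simp add: binomial_eq_0)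
    thus ?thesis unfolding sum.atMost_Suc_shift by simp
  qed
  finally show ?thesis by (simp add: sum.distrib algebra_simps)
qed

lemma sum_binomial_divide_Suc:
  fixes \<beta> :: "nat \<Rightarrow> 'a :: field_char_0"
  shows "(\<Sum>k\<le>Suc s. of_nat (Suc s choose k) * \<beta> k) / of_nat (Suc s)
       = \<beta> 0 / of_nat (Suc s) + (\<Sum>j\<le>s. of_nat (s choose j) * (\<beta> (Suc j) / of_nat (Suc j)))"
proof -
  have summand: "of_nat (Suc s choose Suc j) * \<beta> (Suc j) / of_nat (Suc s)
      = of_nat (s choose j) * (\<beta> (Suc j) / of_nat (Suc j))" for j
  proof -
    have "of_nat (Suc s choose Suc j) * of_nat (Suc j) = (of_nat (s choose j) * of_nat (Suc s) :: 'a)"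
      using Suc_times_binomial_eq[of s j] by (metis mult.commute of_nat_mult)
    thus ?thesis by (simp add: field_simps del: of_nat_Suc binomial_Suc_Suc)
  qed
  have "(\<Sum>k\<le>Suc s. of_nat (Suc s choose k) * \<beta> k) / of_nat (Suc s)
      = \<beta> 0 / of_nat (Suc s) + (\<Sum>j\<le>s. of_nat (Suc s choose Suc j) * \<beta> (Suc j) / of_nat (Suc s))"
    unfolding sum.atMost_Suc_shift
    by (simp add: add_divide_distrib sum_divide_distrib del: binomial_Suc_Suc of_nat_Suc)
  thus ?thesis
    by (simp only: summand)
qed

lemma sum_binomial_gbinomial_divide:
  fixes y :: "'a :: field_char_0"
  assumes "y \<noteq> -1"
  shows "(\<Sum>s\<le>m. of_nat (m choose s) * (y gchoose (s + 1)) / of_nat (s + 2))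
       = ((y + of_nat m + 1) gchoose (m + 2)) / (y + 1)"
proof -
  have y1: "y + 1 \<noteq> 0"
    using assms eq_neg_iff_add_eq_0[of y 1] by simp
  have "(y gchoose (s + 1)) / of_nat (s + 2) = ((y + 1) gchoose (s + 2)) / (y + 1)" for s
    using gbinomial_absorption[of "Suc s" "y + 1"] y1
    by (simp add: field_simps del: of_nat_Suc)
  hence "(\<Sum>s\<le>m. of_nat (m choose s) * (y gchoose (s + 1)) / of_nat (s + 2))
       = (\<Sum>s\<le>m. of_nat (m choose s) * ((y + 1) gchoose (s + 2))) / (y + 1)"
    by (simp add: sum_divide_distrib times_divide_eq_right[symmetric] del: times_divide_eq_right)
  also have "\<dots> = ((y + of_nat m + 1) gchoose (m + 2)) / (y + 1)"
    using gbinomial_Vandermonde_offset[of m "y + 1" 2] by (simp add: add_ac)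
  finally show ?thesis .
qed

lemma sum_binomial_transform_gbinomial:
  fixes \<beta> :: "nat \<Rightarrow> 'a :: field_char_0" and y :: 'a
  assumes "y \<noteq> -1"
  shows "(\<Sum>s\<le>m. (\<Sum>k\<le>s + 2. of_nat (s + 2 choose k) * \<beta> k) / of_nat (s + 2)
            * of_nat (m choose s) * (y gchoose (s + 1)))
       = \<beta> 0 * ((y + of_nat m + 1) gchoose (m + 2)) / (y + 1)
         + (\<Sum>t\<le>m. of_nat (m choose t) * ((y + of_nat m - of_nat t) gchoose (m + 1))
              * (\<beta> (t + 1) / of_nat (t + 1) + \<beta> (t + 2) / of_nat (t + 2)))"
proof -
  define \<delta> where "\<delta> t = \<beta> (t + 1) / of_nat (t + 1) + \<beta> (t + 2) / of_nat (t + 2)" for t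
  define w where "w s = of_nat (m choose s) * (y gchoose (s + 1))" for s
  have mean: "(\<Sum>k\<le>s + 2. of_nat (s + 2 choose k) * \<beta> k) / of_nat (s + 2)
      = \<beta> 0 / of_nat (s + 2) + (\<Sum>t\<le>m. of_nat (s choose t) * \<delta> t)" if "s \<le> m" for s
  proof -
    have "(\<Sum>k\<le>s + 2. of_nat (s + 2 choose k) * \<beta> k) / of_nat (s + 2)
        = \<beta> 0 / of_nat (s + 2) + (\<Sum>j\<le>Suc s. of_nat (Suc s choose j) * (\<beta> (Suc j) / of_nat (Suc j)))"
      using sum_binomial_divide_Suc[of "Suc s" \<beta>] by (simp add: numeral_2_eq_2)
    also have "\<dots> = \<beta> 0 / of_nat (s + 2) + (\<Sum>t\<le>s. of_nat (s choose t) * \<delta> t)"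
      unfolding sum_binomial_Pascal by (simp add: \<delta>_def numeral_2_eq_2)
    also have "(\<Sum>t\<le>s. of_nat (s choose t) * \<delta> t) = (\<Sum>t\<le>m. of_nat (s choose t) * \<delta> t)"
      using that by (intro sum.mono_neutral_left) (auto simp: binomial_eq_0)
    finally show ?thesis .
  qed
  have "(\<Sum>s\<le>m. (\<Sum>k\<le>s + 2. of_nat (s + 2 choose k) * \<beta> k) / of_nat (s + 2)
            * of_nat (m choose s) * (y gchoose (s + 1)))
      = (\<Sum>s\<le>m. \<beta> 0 * (w s / of_nat (s + 2)) + (\<Sum>t\<le>m. \<delta> t * (of_nat (s choose t) * w s)))"
  proof (rule sum.cong[OF refl])
    fix s assume "s \<in> {..m}"
    hence "s \<le> m" by simp
    show "(\<Sum>k\<le>s + 2. of_nat (s + 2 choose k) * \<beta> k) / of_nat (s + 2)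
            * of_nat (m choose s) * (y gchoose (s + 1))
        = \<beta> 0 * (w s / of_nat (s + 2)) + (\<Sum>t\<le>m. \<delta> t * (of_nat (s choose t) * w s))"
      unfolding mean[OF \<open>s \<le> m\<close>] w_def by (simp add: distrib_left sum_distrib_left mult_ac)
  qed
  also have "\<dots> = \<beta> 0 * (\<Sum>s\<le>m. w s / of_nat (s + 2))
                   + (\<Sum>t\<le>m. \<delta> t * (\<Sum>s\<le>m. of_nat (s choose t) * w s))"
    unfolding sum.distrib sum_distrib_left by (subst (2) sum.swap) (rule refl)
  also have "\<dots> = \<beta> 0 * ((y + of_nat m + 1) gchoose (m + 2)) / (y + 1)
         + (\<Sum>t\<le>m. of_nat (m choose t) * ((y + of_nat m - of_nat t) gchoose (m + 1)) * \<delta> t)"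
    using sum_binomial_gbinomial_divide[OF assms, of m] sum_choose_choose_gbinomial[of _ m y 1]
    by (simp add: w_def mult_ac)
  finally show ?thesis unfolding \<delta>_def .
qed

theorem mainTheorem2:
  fixes n :: nat and x y :: complex
  assumes "n \<ge> 1" and "y \<noteq> -1"
  shows "(\<Sum>r=2..n+1. (-1)^r * bernpoly r x / of_nat r
            * of_nat ((n - 1) choose (r - 2)) * (y gchoose (r - 1)))
       = (\<Sum>r=1..n. of_nat ((n - 1) choose (r - 1)) * ((y + of_nat n - of_nat r) gchoose n)
            * (bernpoly (r + 1) (-x) / of_nat (r + 1) + bernpoly r (-x) / of_nat r))
         + 1 / (y + 1) * ((y + of_nat n) gchoose (n + 1))"
proof -
  obtain m where n: "n = Suc m"
    using assms(1) by (cases n) auto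
  have reflected: "(-1) ^ r * bernpoly r x = (\<Sum>k\<le>r. of_nat (r choose k) * bernpoly k (-x))" for r
    using bernpoly_add[of r "-x" 1] by (simp flip: bernpoly_reflect)
  have "(\<Sum>r=2..n+1. (-1)^r * bernpoly r x / of_nat r
            * of_nat ((n - 1) choose (r - 2)) * (y gchoose (r - 1)))
      = (\<Sum>s\<le>m. (\<Sum>k\<le>s + 2. of_nat (s + 2 choose k) * bernpoly k (-x)) / of_nat (s + 2)
            * of_nat (m choose s) * (y gchoose (s + 1)))"
  proof -
    have "{2..n+1} = {0+2..m+2}"
      using n by simp
    thus ?thesis
      by (simp only: sum.shift_bounds_cl_nat_ivl atLeast0AtMost[symmetric] reflected) (simp add: n)
  qed
  also have "\<dots> = 1 / (y + 1) * ((y + of_nat n) gchoose (n + 1))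
         + (\<Sum>t\<le>m. of_nat (m choose t) * ((y + of_nat m - of_nat t) gchoose (m + 1))
              * (bernpoly (t + 1) (-x) / of_nat (t + 1) + bernpoly (t + 2) (-x) / of_nat (t + 2)))"
    unfolding sum_binomial_transform_gbinomial[OF assms(2)] by (simp add: n add_ac)
  also have "\<dots> = (\<Sum>r=1..n. of_nat ((n - 1) choose (r - 1)) * ((y + of_nat n - of_nat r) gchoose n)
            * (bernpoly (r + 1) (-x) / of_nat (r + 1) + bernpoly r (-x) / of_nat r))
         + 1 / (y + 1) * ((y + of_nat n) gchoose (n + 1))"
  proof -
    have "{1..n} = {Suc 0..Suc m}"
      using n by simp
    thus ?thesis
      by (simp only: sum.shift_bounds_cl_Suc_ivl atLeast0AtMost[symmetric]) (simp add: n add_ac)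
  qed
  finally show ?thesis .
qed

end
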